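(* Let $c\ge1$ be an integer and let $p_{+c}$ denote the perturbed collection of p-values produced from $p$ by the procedure INCREASE-c. Then, for any collection of alternative distributions $\{\mathbb P^1_i\}_{i\in\mathcal H_1}$, $$\mathbb E\,\mathrm{FDP}[BH_q;p_{+c}]=\mathbb E\,\mathrm{FDP}[BH_q;p]+\Delta_c,\qquad\text{where }\ \Delta_c:=\mathbb E\Big[\frac{c}{\tilde k_{+c}};\,B^0_{N+1}\ge c\Big].$$
   Context: Setting: $N\ge 1$ tests indexed by $\mathcal N=\{1,\dots,N\}=\mathcal H_0\sqcup\mathcal H_1$ (null and alternative indices), $N_0=|\mathcal H_0|$, $N_1=|\mathcal H_1|$. The p-values $p=(p_i)_{i\in\mathcal N}$ are jointly independent, with $p_i\sim U(0,1)$ for $i\in\mathcal H_0$ and $p_i\sim\mathbb P^1_i$ (an arbitrary distribution on $[0,1]$) for $i\in\mathcal H_1$. Fix $q\in(0,1)$. Bins: $B_i=\{x:(i-1)q/N\le x<iq/N\}$ for $i=1,\dots,N$, and $B_{N+1}=[q,1]$. For a collection of values $x=(x_i)_{i\in\mathcal N}\in[0,1]^N$, loads are $B^0_i=|\{j\in\mathcal H_0:x_j\in B_i\}|$, $B^{\mathcal N}_i=|\{j\in\mathcal N:x_j\in B_i\}|$, $B^{\ast}_{a:b}=\sum_{l=a}^b B^\ast_l$, $B^\ast_{1:0}=0$; unless stated otherwise loads refer to $x=p$. The Benjamini–Hochberg procedure $BH_q$ applied to $x$ computes the rejection count $\tilde k(x)=\max\{i\in\{0,\dots,N\}:B^{\mathcal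 N}_{1:i}=i\}$ and rejects exactly the tests $j$ with $x_j\in B_1\cup\dots\cup B_{\tilde k(x)}$; its false detection proportion is $\mathrm{FDP}[BH_q;x]=B^0_{1:\tilde k(x)}/\max(\tilde k(x),1)$. Write $\tilde k=\tilde k(p)$, and $\tilde k_{+c}=\max\{i\in\{c,\dots,N\}:B^{\mathcal N}_{1:i}=i-c\}$ if $B^0_{N+1}\ge c$, $\tilde k_{+c}=\tilde k$ otherwise (loads of $p$). INCREASE-c: if $B^0_{N+1}\ge c$, take the $c$ largest null p-values lying in $B_{N+1}$ (ties broken arbitrarily) and change each of them to a value in bin $B_{\tilde k_{+c}}$, leaving all other p-values unchanged; otherwise leave $p$ unchanged. The result is $p_{+c}$. $\mathbb E[X;A]=\mathbb E[X\mathbf 1_A]$. *)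

theory Defs
  imports "HOL-Probability.Probability"
begin

text \<open>Bins: for 1 \<le> i \<le> N, B_i = [(i-1)q/N, iq/N); B_{N+1} = [q,1].
  Values are indexed by {1..N}; a collection of p-values is a function nat \<Rightarrow> real,
  only its values on {1..N} matter.\<close>

definition in_bin :: "real \<Rightarrow> nat \<Rightarrow> nat \<Rightarrow> real \<Rightarrow> bool" where
  "in_bin q N i y =
     (if i = N + 1 then q \<le> y \<and> y \<le> 1
      else 1 \<le> i \<and> i \<le> N \<and> real (i - 1) * q / real N \<le> y \<and> y < real i * q / real N)"

text \<open>Load of bin i restricted to index set S (S = H0 gives B^0_i, S = {1..N} gives B^N_i).\<close>
definition load :: "real \<Rightarrow> nat \<Rightarrow> nat set \<Rightarrow> (nat \<Rightarrow> real) \<Rightarrow> nat \<Rightarrow> nat" where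
  "load q N S x i = card {j \<in> S. in_bin q N i (x j)}"

text \<open>Cumulative load B_{a:b} (empty sum = 0, in particular B_{1:0} = 0).\<close>
definition load_range :: "real \<Rightarrow> nat \<Rightarrow> nat set \<Rightarrow> (nat \<Rightarrow> real) \<Rightarrow> nat \<Rightarrow> nat \<Rightarrow> nat" where
  "load_range q N S x a b = (\<Sum>l = a..b. load q N S x l)"

definition k_BH :: "real \<Rightarrow> nat \<Rightarrow> (nat \<Rightarrow> real) \<Rightarrow> nat" where
  "k_BH q N x = Max {i \<in> {0..N}. load_range q N {1..N} x 1 i = i}"

definition FDP_BH :: "real \<Rightarrow> nat \<Rightarrow> nat set \<Rightarrow> (nat \<Rightarrow> real) \<Rightarrow> real" where
  "FDP_BH q N H0 x =
     real (load_range q N H0 x 1 (k_BH q N x)) / real (max (k_BH q N x) 1)"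

definition k_plus :: "real \<Rightarrow> nat \<Rightarrow> nat set \<Rightarrow> nat \<Rightarrow> (nat \<Rightarrow> real) \<Rightarrow> nat" where
  "k_plus q N H0 c x =
     (if load q N H0 x (N + 1) \<ge> c
      then Max {i \<in> {c..N}. load_range q N {1..N} x 1 i = i - c}
      else k_BH q N x)"

text \<open>y is a possible outcome of INCREASE-c applied to x (any tie-breaking among the
  null values in B_{N+1}, any new values in bin B_{k_plus}).\<close>
definition is_increase :: "real \<Rightarrow> nat \<Rightarrow> nat set \<Rightarrow> nat \<Rightarrow> (nat \<Rightarrow> real) \<Rightarrow> (nat \<Rightarrow> real) \<Rightarrow> bool" where
  "is_increase q N H0 c x y =
     (if load q N H0 x (N + 1) \<ge> c then
        (\<exists>S. S \<subseteq> {j \<in> H0. in_bin q N (N + 1) (x j)} \<and> card S = c \<and>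
             (\<forall>j\<in>S. \<forall>j'\<in>{j \<in> H0. in_bin q N (N + 1) (x j)} - S. x j' \<le> x j) \<and>
             (\<forall>j\<in>S. in_bin q N (k_plus q N H0 c x) (y j)) \<and>
             (\<forall>j\<in>{1..N} - S. y j = x j))
      else (\<forall>j\<in>{1..N}. y j = x j))"

end

(*
  After INCREASE-c (when B^0_{N+1} \<ge> c), BH rejects exactly k_{+c} hypotheses, c more of them
  nulls, so pointwise FDP[BH_q; p_{+c}] = (B^0_{1:k_{+c}} + c) / k_{+c}. It remains to show that
  E[B^0_{1:K}/K; B^0_{N+1} \<ge> c] is the same for K = k_{+c} and K = \<tilde>k. Write it as a sum over
  nulls j of 1{p_j < Kq/N}/K. Moving p_j inside [0, Kq/N) changes neither K nor the event, so the
  j-th term equals \<Sum>_k 1{p_j < kq/N} w_k(p^(j)), where p^(j) is p with p_j set to 0 and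
  w_k(y) = 1{K(y) = k and the event holds for y}/k. As p^(j) is independent of the uniform p_j,
  its expectation is (q/N) P(event for p^(j)) for both choices of K. The distributions of the
  alternative p-values never enter.
*)
theory Submission
  imports Defs
begin

(* keeps the lower index 1 of load_range from being rewritten to Suc 0 *)
declare One_nat_def [simp del]

lemma int_seq_attains_value:
  fixes f :: "nat \<Rightarrow> int"
  assumes "\<forall>i<b. f i - 1 \<le> f (Suc i)" "v \<le> f a" "f b \<le> v" "a \<le> b"
  shows "\<exists>i\<in>{a..b}. f i = v"
  using assms
proof (induction b)
  case 0
  then show ?case by auto
next
  case (Suc b)
  show ?case
  proof (cases "a = Suc b")
    case True
    with Suc.prems show ?thesis by auto
  next
    case False
    then have "a \<le> b" using Suc.prems by auto
    show ?thesis
    proof (cases "f b \<le> v")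
      case True
      then show ?thesis using Suc.IH Suc.prems \<open>a \<le> b\<close> by fastforce
    next
      case False
      then have "f (Suc b) = v" using Suc.prems by force
      then show ?thesis using \<open>a \<le> b\<close> by auto
    qed
  qed
qed

lemma measurable_map_list_count_space:
  fixes f :: "'i \<Rightarrow> 'a \<Rightarrow> 'c::countable"
  assumes "\<And>j. j \<in> set js \<Longrightarrow> f j \<in> measurable M (count_space UNIV)"
  shows "(\<lambda>\<omega>. map (\<lambda>j. f j \<omega>) js) \<in> measurable M (count_space UNIV)"
  using assms
proof (induction js)
  case Nil
  then show ?case by simp
next
  case (Cons j js)
  have tail: "(\<lambda>\<omega>. map (\<lambda>j. f j \<omega>) js) \<in> measurable M (count_space UNIV)"
    and head: "f j \<in> measurable M (count_space UNIV)"
    using Cons by simp_all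
  show ?case unfolding measurable_count_space_eq2_countable
  proof (intro conjI ballI)
    fix l :: "'c list"
    show "(\<lambda>\<omega>. map (\<lambda>j. f j \<omega>) (j # js)) -` {l} \<inter> space M \<in> sets M"
    proof (cases l)
      case Nil
      then have "(\<lambda>\<omega>. map (\<lambda>j. f j \<omega>) (j # js)) -` {l} \<inter> space M = {}" by auto
      then show ?thesis by simp
    next
      case (Cons a l')
      then have "(\<lambda>\<omega>. map (\<lambda>j. f j \<omega>) (j # js)) -` {l} \<inter> space M =
          (f j -` {a} \<inter> space M) \<inter> ((\<lambda>\<omega>. map (\<lambda>j. f j \<omega>) js) -` {l'} \<inter> space M)"
        by auto
      then show ?thesis using measurable_sets[OF head] measurable_sets[OF tail] by simp
    qed
  qed simp
qed

lemma load_range_Suc: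
  "load_range q N S x 1 (Suc k) = load_range q N S x 1 k + load q N S x (Suc k)"
  unfolding load_range_def by (simp add: sum.cl_ivl_Suc)

lemma load_range_0: "load_range q N S x 1 0 = 0"
  by (simp add: load_range_def)

lemma load_mono: "S \<subseteq> T \<Longrightarrow> finite T \<Longrightarrow> load q N S x l \<le> load q N T x l"
  unfolding load_def by (intro card_mono) auto

locale BH_bins =
  fixes q :: real and N :: nat
  assumes N_pos: "1 \<le> N" and q_pos: "0 < q"
begin

abbreviation load_upto :: "nat set \<Rightarrow> (nat \<Rightarrow> real) \<Rightarrow> nat \<Rightarrow> nat" where
  "load_upto S x k \<equiv> load_range q N S x 1 k"

(* B_1 \<union> ... \<union> B_k = [0, kq/N) for k \<le> N, written without division *)
definition in_first_bins :: "nat \<Rightarrow> real \<Rightarrow> bool" where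
  "in_first_bins k t \<longleftrightarrow> 0 \<le> t \<and> t * real N < real k * q"

lemma in_first_bins_mono:
  assumes "in_first_bins k t" "k \<le> l"
  shows "in_first_bins l t"
proof -
  have "real k * q \<le> real l * q" using assms(2) q_pos by simp
  then show ?thesis using assms(1) unfolding in_first_bins_def by linarith
qed

lemma in_first_bins_pos:
  assumes "in_first_bins k t"
  shows "1 \<le> k"
proof (rule ccontr)
  assume "\<not> 1 \<le> k"
  then have "k = 0" by linarith
  then have "t * real N < 0" "0 \<le> t * real N" using assms unfolding in_first_bins_def by auto
  then show False by simp
qed

lemma in_first_bins_zero: "1 \<le> k \<Longrightarrow> in_first_bins k 0"
  unfolding in_first_bins_def using q_pos by simp

lemma in_first_bins_less_q:
  assumes "in_first_bins k t" "k \<le> N"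
  shows "t < q"
proof -
  have "real k * q \<le> real N * q" using assms(2) q_pos by simp
  then have "t * real N < q * real N" using assms(1) unfolding in_first_bins_def by (simp add: mult.commute)
  then show ?thesis using N_pos by simp
qed

lemma not_in_last_bin: "in_first_bins k t \<Longrightarrow> k \<le> N \<Longrightarrow> \<not> in_bin q N (N + 1) t"
  using in_first_bins_less_q unfolding in_bin_def by force

lemma in_bin_le: "in_bin q N l t \<Longrightarrow> 1 \<le> l \<and> l \<le> N + 1"
  unfolding in_bin_def by (auto split: if_splits)

lemma in_bin_iff_in_first_bins:
  assumes "1 \<le> l" "l \<le> N"
  shows "in_bin q N l t \<longleftrightarrow> in_first_bins l t \<and> \<not> in_first_bins (l - 1) t"
proof -
  have N: "0 < real N" using N_pos by simp
  have lower: "real (l - 1) * q / real N \<le> t \<longleftrightarrow> real (l - 1) * q \<le> t * real N"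
    and upper: "t < real l * q / real N \<longleftrightarrow> t * real N < real l * q"
    using N by (simp_all add: field_simps)
  have "0 \<le> real (l - 1) * q" using q_pos by simp
  then have "real (l - 1) * q \<le> t * real N \<Longrightarrow> 0 \<le> t"
    using N by (smt (verit) mult_neg_pos)
  then show ?thesis using assms unfolding in_bin_def in_first_bins_def lower upper by auto
qed

lemma ex_in_bin_iff_in_first_bins:
  "k \<le> N \<Longrightarrow> (\<exists>l\<in>{1..k}. in_bin q N l t) \<longleftrightarrow> in_first_bins k t"
proof (induction k)
  case 0
  then show ?case using in_first_bins_pos[of 0 t] by auto
next
  case (Suc k)
  have "{1..Suc k} = insert (Suc k) {1..k}" by auto
  then have "(\<exists>l\<in>{1..Suc k}. in_bin q N l t) \<longleftrightarrow>
      in_first_bins k t \<or> (in_first_bins (Suc k) t \<and> \<not> in_first_bins k t)"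
    using Suc in_bin_iff_in_first_bins[of "Suc k"] by (auto simp: Suc_le_eq)
  then show ?case using in_first_bins_mono[of k t "Suc k"] by auto
qed

lemma in_first_bins_iff_of_in_bin:
  assumes "in_bin q N l t" "l \<le> N"
  shows "in_first_bins k t \<longleftrightarrow> l \<le> k"
proof -
  have "1 \<le> l" using in_bin_le[OF assms(1)] by simp
  then have "in_first_bins l t" "\<not> in_first_bins (l - 1) t"
    using in_bin_iff_in_first_bins assms by auto
  then show ?thesis using in_first_bins_mono[of k t "l - 1"] in_first_bins_mono[of l t k] by force
qed

lemma in_bin_unique: "in_bin q N l t \<Longrightarrow> in_bin q N l' t \<Longrightarrow> l = l'"
proof (induction l l' rule: linorder_wlog)
  case (le l l')
  show ?case
  proof (rule ccontr)
    assume "l \<noteq> l'"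
    then have "l \<le> N" using le in_bin_le[of l' t] by linarith
    then have "in_first_bins l t" using le.prems(1) in_first_bins_iff_of_in_bin by blast
    show False
    proof (cases "l' = N + 1")
      case True
      then show ?thesis using not_in_last_bin \<open>in_first_bins l t\<close> \<open>l \<le> N\<close> le.prems(2) by blast
    next
      case False
      then have "l' \<le> N" using le.prems(2) in_bin_le by force
      then show ?thesis using in_first_bins_iff_of_in_bin[OF le.prems(2)] \<open>in_first_bins l t\<close> \<open>l \<noteq> l'\<close> le(1)
        by simp
    qed
  qed
qed (rule sym, blast)

lemma load_upto_eq_card_ex:
  assumes "finite S"
  shows "load_upto S x k = card {j \<in> S. \<exists>l\<in>{1..k}. in_bin q N l (x j)}"
proof (induction k)
  case 0
  then show ?case by (simp add: load_range_0)
next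
  case (Suc k)
  have "{1..Suc k} = insert (Suc k) {1..k}" by auto
  then have split: "{j \<in> S. \<exists>l\<in>{1..Suc k}. in_bin q N l (x j)} =
      {j \<in> S. \<exists>l\<in>{1..k}. in_bin q N l (x j)} \<union> {j \<in> S. in_bin q N (Suc k) (x j)}"
    by auto
  have "{j \<in> S. \<exists>l\<in>{1..k}. in_bin q N l (x j)} \<inter> {j \<in> S. in_bin q N (Suc k) (x j)} = {}"
  proof (intro equals0I)
    fix j
    assume "j \<in> {j \<in> S. \<exists>l\<in>{1..k}. in_bin q N l (x j)} \<inter> {j \<in> S. in_bin q N (Suc k) (x j)}"
    then obtain l where "l \<le> k" "in_bin q N l (x j)" "in_bin q N (Suc k) (x j)" by auto
    then show False using in_bin_unique[of l "x j" "Suc k"] by simp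
  qed
  with assms show ?case unfolding load_range_Suc Suc split load_def
    by (subst card_Un_disjoint) auto
qed

lemma load_upto_eq_card:
  "finite S \<Longrightarrow> k \<le> N \<Longrightarrow> load_upto S x k = card {j \<in> S. in_first_bins k (x j)}"
  by (simp add: load_upto_eq_card_ex ex_in_bin_iff_in_first_bins)

lemma load_upto_le_card: "finite S \<Longrightarrow> load_upto S x k \<le> card S"
  by (simp add: load_upto_eq_card_ex card_mono)

lemma load_upto_add_last_le: "load_upto {1..N} x N + load q N {1..N} x (N + 1) \<le> N"
  using load_upto_le_card[of "{1..N}" x "Suc N"] unfolding load_range_Suc by (simp add: Suc_eq_plus1)

lemma ex_load_upto_add_eq:
  assumes "a \<le> b" "a \<le> load_upto S x a + d" "load_upto S x b + d \<le> b"
  shows "\<exists>i\<in>{a..b}. load_upto S x i + d = i"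
proof -
  define f where "f i = int (load_upto S x i + d) - int i" for i
  have "\<forall>i<b. f i - 1 \<le> f (Suc i)" unfolding f_def by (simp add: load_range_Suc)
  then obtain i where "i \<in> {a..b}" "f i = 0"
    using int_seq_attains_value[of b f 0 a] assms unfolding f_def by auto
  then have "load_upto S x i + d = i" unfolding f_def by linarith
  then show ?thesis using \<open>i \<in> {a..b}\<close> by blast
qed

lemma
  shows k_BH_le: "k_BH q N x \<le> N"
    and load_upto_k_BH: "load_upto {1..N} x (k_BH q N x) = k_BH q N x"
    and k_BH_greatest: "i \<le> N \<Longrightarrow> load_upto {1..N} x i = i \<Longrightarrow> i \<le> k_BH q N x"
proof -
  define A where "A = {i \<in> {0..N}. load_upto {1..N} x i = i}"
  have "finite A" "0 \<in> A" unfolding A_def by (simp_all add: load_range_0)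
  then have "Max A \<in> A" by (intro Max_in) auto
  moreover have "k_BH q N x = Max A" unfolding k_BH_def A_def ..
  ultimately show "k_BH q N x \<le> N" "load_upto {1..N} x (k_BH q N x) = k_BH q N x"
    unfolding A_def by auto
  show "i \<le> N \<Longrightarrow> load_upto {1..N} x i = i \<Longrightarrow> i \<le> k_BH q N x"
    unfolding \<open>k_BH q N x = Max A\<close> using \<open>finite A\<close> by (intro Max_ge) (auto simp: A_def)
qed

lemma k_BH_pos:
  assumes "j \<in> {1..N}" "in_bin q N 1 (x j)"
  shows "1 \<le> k_BH q N x"
proof -
  have "{j} \<subseteq> {j \<in> {1..N}. in_bin q N 1 (x j)}" using assms by auto
  then have "card {j} \<le> load q N {1..N} x 1" unfolding load_def by (intro card_mono) auto
  then have "1 \<le> load q N {1..N} x 1" by simp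
  then have "1 \<le> load_upto {1..N} x 1" using load_range_Suc[of q N "{1..N}" x 0] by (simp add: load_range_0 One_nat_def)
  moreover have "load_upto {1..N} x N \<le> N" using load_upto_add_last_le[of x] by linarith
  ultimately obtain i where "i \<in> {1..N}" "load_upto {1..N} x i = i"
    using ex_load_upto_add_eq[of 1 N "{1..N}" x 0] N_pos by auto
  then show ?thesis using k_BH_greatest[of i x] by auto
qed

lemma load_fun_upd_first_bins:
  assumes "in_first_bins k (x j)" "in_first_bins k t" "k \<le> N"
  shows "load q N S (x(j := t)) (N + 1) = load q N S x (N + 1)"
proof -
  have "\<not> in_bin q N (N + 1) (x j)" "\<not> in_bin q N (N + 1) t"
    using assms not_in_last_bin by blast+
  then have "{i \<in> S. in_bin q N (N + 1) ((x(j := t)) i)} = {i \<in> S. in_bin q N (N + 1) (x i)}"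
    by auto
  then show ?thesis unfolding load_def by simp
qed

lemma load_upto_fun_upd_first_bins:
  assumes "in_first_bins k (x j)" "in_first_bins k t" "finite S" "k \<le> i" "i \<le> N"
  shows "load_upto S (x(j := t)) i = load_upto S x i"
proof -
  have "in_first_bins i (x j)" "in_first_bins i t"
    using assms in_first_bins_mono by blast+
  then have "{l \<in> S. in_first_bins i ((x(j := t)) l)} = {l \<in> S. in_first_bins i (x l)}"
    by auto
  then show ?thesis using assms by (simp add: load_upto_eq_card)
qed

lemma k_BH_fun_upd:
  assumes "in_first_bins (k_BH q N x) (x j)" "in_first_bins (k_BH q N x) t"
  shows "k_BH q N (x(j := t)) = k_BH q N x"
proof -
  let ?K = "k_BH q N x" and ?x = "x(j := t)"
  have same: "load_upto {1..N} ?x i = load_upto {1..N} x i" if "?K \<le> i" "i \<le> N" for i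
    using load_upto_fun_upd_first_bins assms that by simp
  have "?K \<le> k_BH q N ?x"
    using same[of ?K] k_BH_le[of x] load_upto_k_BH[of x] k_BH_greatest[of ?K ?x] by simp
  moreover have "k_BH q N ?x \<le> ?K"
    using same[of "k_BH q N ?x"] calculation k_BH_le[of ?x] load_upto_k_BH[of ?x]
      k_BH_greatest[of "k_BH q N ?x" x] by simp
  ultimately show ?thesis by simp
qed

lemma load_upto_move_to_bin:
  assumes "Sm \<subseteq> T" "T \<subseteq> {1..N}" "i \<le> N" "K \<le> N"
    and "\<forall>j\<in>Sm. q \<le> x j" "\<forall>j\<in>Sm. in_bin q N K (y j)" "\<forall>j\<in>T - Sm. y j = x j"
  shows "load_upto T y i = load_upto T x i + (if K \<le> i then card Sm else 0)"
proof -
  have "finite T" using assms(2) finite_subset by blast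
  have "\<not> in_first_bins i (x j)" if "j \<in> Sm" for j
    using in_first_bins_less_q assms(3,5) that by force
  then have x_set: "{j \<in> T. in_first_bins i (x j)} = {j \<in> T - Sm. in_first_bins i (x j)}"
    by auto
  have "in_first_bins i (y j) \<longleftrightarrow> K \<le> i" if "j \<in> Sm" for j
    using in_first_bins_iff_of_in_bin assms(4,6) that by blast
  then have y_set: "{j \<in> T. in_first_bins i (y j)} =
      {j \<in> T - Sm. in_first_bins i (x j)} \<union> (if K \<le> i then Sm else {})"
    using assms(1,7) by (auto; metis Diff_iff)
  have "finite Sm" using \<open>finite T\<close> assms(1) finite_subset by blast
  then show ?thesis
    unfolding load_upto_eq_card[OF \<open>finite T\<close> assms(3)] x_set y_set
    using \<open>finite T\<close> by (subst card_Un_disjoint) auto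
qed

lemma FDP_BH_eq_div: "FDP_BH q N H0 x = real (load_upto H0 x (k_BH q N x)) / real (k_BH q N x)"
  by (cases "k_BH q N x = 0") (simp_all add: FDP_BH_def load_range_0 max_def)

lemma abs_FDP_BH_le_1:
  assumes "H0 \<subseteq> {1..N}"
  shows "\<bar>FDP_BH q N H0 x\<bar> \<le> 1"
proof -
  have "finite H0" using assms finite_subset by blast
  then have "load_upto H0 x (k_BH q N x) \<le> load_upto {1..N} x (k_BH q N x)"
    using assms k_BH_le by (simp add: load_upto_eq_card) (intro card_mono; auto)
  then show ?thesis unfolding FDP_BH_eq_div load_upto_k_BH by (auto simp: divide_le_eq_1)
qed

definition same_bins :: "(nat \<Rightarrow> real) \<Rightarrow> (nat \<Rightarrow> real) \<Rightarrow> bool" where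
  "same_bins x x' \<longleftrightarrow> (\<forall>j\<in>{1..N}. \<forall>l. in_bin q N l (x j) \<longleftrightarrow> in_bin q N l (x' j))"

definition bin_invariant :: "((nat \<Rightarrow> real) \<Rightarrow> 'b) \<Rightarrow> bool" where
  "bin_invariant G \<longleftrightarrow> (\<forall>x x'. same_bins x x' \<longrightarrow> G x = G x')"

lemma same_bins_if_eq_on: "(\<And>j. j \<in> {1..N} \<Longrightarrow> x j = x' j) \<Longrightarrow> same_bins x x'"
  unfolding same_bins_def by simp

lemma same_bins_in_first_bins:
  "same_bins x x' \<Longrightarrow> j \<in> {1..N} \<Longrightarrow> k \<le> N \<Longrightarrow> in_first_bins k (x j) \<longleftrightarrow> in_first_bins k (x' j)"
  unfolding same_bins_def ex_in_bin_iff_in_first_bins[symmetric] by simp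

lemma same_bins_load: "same_bins x x' \<Longrightarrow> S \<subseteq> {1..N} \<Longrightarrow> load q N S x = load q N S x'"
  unfolding same_bins_def load_def by (intro ext arg_cong[where f = card]) auto

lemma bin_invariant_load: "S \<subseteq> {1..N} \<Longrightarrow> bin_invariant (\<lambda>x. load q N S x l)"
  unfolding bin_invariant_def by (simp add: same_bins_load)

lemma bin_invariant_k_BH: "bin_invariant (k_BH q N)"
  unfolding bin_invariant_def k_BH_def load_range_def by (simp add: same_bins_load)

lemma bin_invariant_FDP_BH: "H0 \<subseteq> {1..N} \<Longrightarrow> bin_invariant (FDP_BH q N H0)"
  unfolding bin_invariant_def FDP_BH_def load_range_def
  by (metis bin_invariant_def bin_invariant_k_BH same_bins_load)

lemma in_bin_measurable:
  "Q \<in> borel_measurable M \<Longrightarrow> (\<lambda>\<omega>. in_bin q N l (Q \<omega>)) \<in> measurable M (count_space UNIV)"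
  unfolding in_bin_def by (cases "l = N + 1") simp_all

lemma measurable_bin_invariant:
  fixes G :: "(nat \<Rightarrow> real) \<Rightarrow> real" and Q :: "nat \<Rightarrow> 'a \<Rightarrow> real"
  assumes "bin_invariant G" and Q: "\<And>i. i \<in> {1..N} \<Longrightarrow> Q i \<in> borel_measurable M"
  shows "(\<lambda>\<omega>. G (\<lambda>i. Q i \<omega>)) \<in> borel_measurable M"
proof -
  \<comment> \<open>G factors through the bin pattern of the coordinates, a value in the countable type of
    boolean matrices; rep chooses a vector with a given pattern.\<close>
  define pattern where
    "pattern \<omega> = map (\<lambda>j. map (\<lambda>l. in_bin q N l (Q j \<omega>)) [0..<N + 2]) [1..<N + 1]" for \<omega>
  define rep where
    "rep ps = (\<lambda>j. SOME t. \<forall>l<N + 2. in_bin q N l t = ps ! (j - 1) ! l)" for ps :: "bool list list"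
  have "pattern \<in> measurable M (count_space UNIV)"
    unfolding pattern_def by (intro measurable_map_list_count_space in_bin_measurable Q) auto
  moreover have "same_bins (\<lambda>i. Q i \<omega>) (rep (pattern \<omega>))" for \<omega>
    unfolding same_bins_def
  proof (intro ballI allI)
    fix j l
    assume j: "j \<in> {1..N}"
    have "j - 1 < length [1..<N + 1]" "[1..<N + 1] ! (j - 1) = j"
      using j by (simp_all add: nth_upt, linarith)
    then have row: "pattern \<omega> ! (j - 1) ! l = in_bin q N l (Q j \<omega>)" if "l < N + 2" for l
      using that by (simp del: upt_Suc add: pattern_def)
    then have "\<exists>t. \<forall>l<N + 2. in_bin q N l t = pattern \<omega> ! (j - 1) ! l" by blast
    then have "\<forall>l<N + 2. in_bin q N l (rep (pattern \<omega>) j) = pattern \<omega> ! (j - 1) ! l"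
      unfolding rep_def by (rule someI_ex)
    then show "in_bin q N l (Q j \<omega>) \<longleftrightarrow> in_bin q N l (rep (pattern \<omega>) j)"
      using row in_bin_le by (cases "l < N + 2") force+
  qed
  then have "G (\<lambda>i. Q i \<omega>) = (G \<circ> rep) (pattern \<omega>)" for \<omega>
    using assms(1) unfolding bin_invariant_def by simp
  ultimately show ?thesis by (simp add: measurable_compose[of pattern M "count_space UNIV"])
qed

definition rejection_share ::
    "((nat \<Rightarrow> real) \<Rightarrow> bool) \<Rightarrow> ((nat \<Rightarrow> real) \<Rightarrow> nat) \<Rightarrow> nat \<Rightarrow> (nat \<Rightarrow> real) \<Rightarrow> real" where
  "rejection_share E K j x = (if E x \<and> in_first_bins (K x) (x j) then 1 / real (K x) else 0)"

definition cutoff_stable :: "((nat \<Rightarrow> real) \<Rightarrow> bool) \<Rightarrow> ((nat \<Rightarrow> real) \<Rightarrow> nat) \<Rightarrow> bool" where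
  "cutoff_stable E K \<longleftrightarrow> (\<forall>x j t. E x \<longrightarrow> in_first_bins (K x) (x j) \<longrightarrow> in_first_bins (K x) t \<longrightarrow>
      E (x(j := t)) \<and> K (x(j := t)) = K x)"

lemma sum_rejection_share:
  assumes "finite S" "K x \<le> N"
  shows "(\<Sum>j\<in>S. rejection_share E K j x) =
    (if E x then real (load_upto S x (K x)) / real (K x) else 0)"
  using assms by (simp add: rejection_share_def sum.If_cases load_upto_eq_card Int_def)

lemma rejection_share_leave_one_out:
  assumes "cutoff_stable E K" "\<And>y. K y \<le> N"
  shows "rejection_share E K j x =
    (\<Sum>k\<in>{1..N}. of_bool (in_first_bins k (x j)) * (of_bool (E (x(j := 0)) \<and> K (x(j := 0)) = k) / real k))"
proof -
  \<comment> \<open>0 lies in the first K bins whenever K \<ge> 1, so moving x j to 0 and back changes neither E nor K.\<close>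
  let ?y = "x(j := 0)"
  have forward: "E ?y \<and> K ?y = K x" if "E x" "in_first_bins (K x) (x j)"
    using assms(1) that in_first_bins_zero[OF in_first_bins_pos] unfolding cutoff_stable_def by blast
  have backward: "E x \<and> K x = K ?y" if "E ?y" "in_first_bins (K ?y) (x j)"
  proof -
    have "in_first_bins (K ?y) (?y j)" using in_first_bins_zero[OF in_first_bins_pos[OF that(2)]] by simp
    then have "E (?y(j := x j)) \<and> K (?y(j := x j)) = K ?y"
      using assms(1) that unfolding cutoff_stable_def by blast
    then show ?thesis by simp
  qed
  have "(\<Sum>k\<in>{1..N}. of_bool (in_first_bins k (x j)) * (of_bool (E ?y \<and> K ?y = k) / real k)) =
      (\<Sum>k\<in>{1..N}. if k = K ?y then of_bool (E ?y \<and> in_first_bins k (x j)) / real k else 0)"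
    by (intro sum.cong) auto
  also have "\<dots> = (if K ?y \<in> {1..N} then of_bool (E ?y \<and> in_first_bins (K ?y) (x j)) / real (K ?y) else 0)"
    by (simp add: sum.delta)
  also have "\<dots> = rejection_share E K j x"
  proof (cases "E ?y \<and> in_first_bins (K ?y) (x j)")
    case True
    then have "K ?y \<in> {1..N}" using in_first_bins_pos assms(2)[of ?y] by auto
    then show ?thesis using True backward unfolding rejection_share_def by auto
  next
    case False
    then have "\<not> (E x \<and> in_first_bins (K x) (x j))" using forward by auto
    then show ?thesis using False unfolding rejection_share_def by auto
  qed
  finally show ?thesis ..
qed

lemma abs_rejection_share_le: "\<bar>rejection_share E K j x\<bar> \<le> 1"
  using in_first_bins_pos[of "K x" "x j"] unfolding rejection_share_def by auto

lemma bin_invariant_rejection_share: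
  assumes "bin_invariant E" "bin_invariant K" "\<And>y. K y \<le> N" "j \<in> {1..N}"
  shows "bin_invariant (rejection_share E K j)"
  using assms same_bins_in_first_bins unfolding bin_invariant_def rejection_share_def by metis

end

locale BH_increase = BH_bins +
  fixes H0 :: "nat set" and c :: nat
  assumes H0_sub: "H0 \<subseteq> {1..N}" and c_pos: "1 \<le> c"
begin

abbreviation increase_applies :: "(nat \<Rightarrow> real) \<Rightarrow> bool" where
  "increase_applies x \<equiv> c \<le> load q N H0 x (N + 1)"

abbreviation kplus :: "(nat \<Rightarrow> real) \<Rightarrow> nat" where
  "kplus x \<equiv> k_plus q N H0 c x"

lemma k_plus_Max:
  assumes "increase_applies x"
  defines "A \<equiv> {i. i \<le> N \<and> load_upto {1..N} x i + c = i}"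
  shows "kplus x = Max A" "finite A" "A \<noteq> {}"
proof -
  have "{i \<in> {c..N}. load_upto {1..N} x i = i - c} = A" unfolding A_def by auto
  then show "kplus x = Max A" using assms(1) unfolding k_plus_def by simp
  show "finite A" unfolding A_def by simp
  have "load q N H0 x (N + 1) \<le> load q N {1..N} x (N + 1)"
    using H0_sub by (intro load_mono) auto
  then have "load_upto {1..N} x N + c \<le> N"
    using assms(1) load_upto_add_last_le[of x] by linarith
  then show "A \<noteq> {}"
    using ex_load_upto_add_eq[of 0 N "{1..N}" x c] unfolding A_def by auto
qed

lemma load_upto_k_plus:
  assumes "increase_applies x"
  shows "load_upto {1..N} x (kplus x) + c = kplus x" and "kplus x \<le> N"
proof -
  let ?A = "{i. i \<le> N \<and> load_upto {1..N} x i + c = i}"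
  have "Max ?A \<in> ?A" using k_plus_Max(2,3)[OF assms] by (rule Max_in)
  then show "load_upto {1..N} x (kplus x) + c = kplus x" "kplus x \<le> N"
    using k_plus_Max(1)[OF assms] by simp_all
qed

lemma k_plus_le: "kplus x \<le> N"
  using load_upto_k_plus(2) k_BH_le unfolding k_plus_def by (cases "increase_applies x") auto

lemma k_plus_greatest:
  "increase_applies x \<Longrightarrow> i \<le> N \<Longrightarrow> load_upto {1..N} x i + c = i \<Longrightarrow> i \<le> kplus x"
  using k_plus_Max by (auto intro: Max_ge)

lemma bin_invariant_increase_applies: "bin_invariant increase_applies"
  using bin_invariant_load[OF H0_sub] unfolding bin_invariant_def by metis

lemma bin_invariant_k_plus: "bin_invariant kplus"
  unfolding bin_invariant_def k_plus_def load_range_def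
  using same_bins_load[OF _ H0_sub] same_bins_load[of _ _ "{1..N}"] bin_invariant_k_BH
  unfolding bin_invariant_def by simp

lemma cutoff_stable_k_BH: "cutoff_stable increase_applies (k_BH q N)"
  unfolding cutoff_stable_def
  using load_fun_upd_first_bins k_BH_fun_upd k_BH_le by metis

lemma cutoff_stable_k_plus: "cutoff_stable increase_applies kplus"
  unfolding cutoff_stable_def
proof (intro allI impI conjI)
  fix x j t
  assume applies: "increase_applies x"
    and first: "in_first_bins (kplus x) (x j)" "in_first_bins (kplus x) t"
  let ?K = "kplus x" and ?x = "x(j := t)"
  show applies': "increase_applies ?x"
    using applies load_fun_upd_first_bins[of "kplus x" x j t, OF first k_plus_le] by simp
  have same: "load_upto {1..N} ?x i = load_upto {1..N} x i" if "?K \<le> i" "i \<le> N" for i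
    using load_upto_fun_upd_first_bins[of "kplus x" x j t, OF first] that by simp
  have "?K \<le> kplus ?x"
    using same[of ?K] k_plus_le load_upto_k_plus(1)[OF applies] k_plus_greatest[OF applies'] by simp
  moreover have "kplus ?x \<le> ?K"
    using same[of "kplus ?x"] calculation k_plus_le load_upto_k_plus(1)[OF applies']
      k_plus_greatest[OF applies] by simp
  ultimately show "kplus ?x = ?K" by simp
qed

lemma load_upto_increase:
  assumes "is_increase q N H0 c x y" "increase_applies x" "T = H0 \<or> T = {1..N}" "i \<le> N"
  shows "load_upto T y i = load_upto T x i + (if kplus x \<le> i then c else 0)"
proof -
  obtain S where S: "S \<subseteq> {j \<in> H0. in_bin q N (N + 1) (x j)}" "card S = c"
    "\<forall>j\<in>S. in_bin q N (kplus x) (y j)" "\<forall>j\<in>{1..N} - S. y j = x j"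
    using assms(1,2) unfolding is_increase_def by auto
  have "\<forall>j\<in>S. q \<le> x j" using S(1) unfolding in_bin_def by auto
  moreover have "S \<subseteq> T" "T \<subseteq> {1..N}" using S(1) assms(3) H0_sub by auto
  moreover have "\<forall>j\<in>T - S. y j = x j" using S(4) \<open>T \<subseteq> {1..N}\<close> by auto
  ultimately show ?thesis
    using load_upto_move_to_bin[of S T i "kplus x" x y] S(2,3) assms(4) k_plus_le by auto
qed

lemma FDP_BH_increase:
  assumes "is_increase q N H0 c x y"
  shows "FDP_BH q N H0 y = (if increase_applies x
    then (real (load_upto H0 x (kplus x)) + real c) / real (kplus x) else FDP_BH q N H0 x)"
proof (cases "increase_applies x")
  case False
  then have "same_bins y x" using assms unfolding is_increase_def by (intro same_bins_if_eq_on) auto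
  then show ?thesis using False bin_invariant_FDP_BH[OF H0_sub] unfolding bin_invariant_def by simp
next
  case True
  let ?K = "kplus x"
  have shift: "load_upto {1..N} y i = load_upto {1..N} x i + (if ?K \<le> i then c else 0)"
    if "i \<le> N" for i
    using load_upto_increase[OF assms True] that by simp
  have "?K \<le> k_BH q N y"
    using k_BH_greatest shift[of ?K] load_upto_k_plus(1)[OF True] k_plus_le by simp
  moreover have "k_BH q N y \<le> ?K"
  proof (rule ccontr)
    assume "\<not> k_BH q N y \<le> ?K"
    then have "load_upto {1..N} x (k_BH q N y) + c = k_BH q N y"
      using shift[of "k_BH q N y"] k_BH_le[of y] load_upto_k_BH[of y] by simp
    then show False using k_plus_greatest[OF True] k_BH_le[of y] \<open>\<not> k_BH q N y \<le> ?K\<close> by auto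
  qed
  ultimately have "k_BH q N y = ?K" by simp
  then show ?thesis
    using True FDP_BH_eq_div[of H0 y] load_upto_increase[OF assms True, of H0 ?K] k_plus_le by simp
qed

lemma FDP_BH_increase_decomp:
  assumes "is_increase q N H0 c x y"
  shows "FDP_BH q N H0 y = FDP_BH q N H0 x + (if increase_applies x then real c / real (kplus x) else 0)
    + (\<Sum>j\<in>H0. rejection_share increase_applies kplus j x)
    - (\<Sum>j\<in>H0. rejection_share increase_applies (k_BH q N) j x)"
proof -
  have "finite H0" using H0_sub finite_subset by blast
  then show ?thesis
    using FDP_BH_increase[OF assms] FDP_BH_eq_div[of H0 x] sum_rejection_share k_plus_le k_BH_le
    by (simp add: add_divide_distrib)
qed

end

locale BH_prob = BH_increase q N H0 c + prob_space M
  for q :: real and N :: nat and H0 :: "nat set" and c :: nat and M :: "'a measure" +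
  fixes P :: "nat \<Rightarrow> 'a \<Rightarrow> real"
  assumes q_le_1: "q \<le> 1"
    and indep: "indep_vars (\<lambda>_. borel) P {1..N}"
    and null_uniform: "\<forall>i\<in>H0. distr M lborel (P i) = uniform_measure lborel {0..1}"
begin

abbreviation p_minus :: "nat \<Rightarrow> 'a \<Rightarrow> nat \<Rightarrow> real" where
  "p_minus j \<omega> \<equiv> (\<lambda>i. P i \<omega>)(j := 0)"

lemma P_measurable [measurable]: "i \<in> {1..N} \<Longrightarrow> P i \<in> borel_measurable M"
  using indep unfolding indep_vars_def by auto

lemma
  fixes G :: "(nat \<Rightarrow> real) \<Rightarrow> real"
  assumes "bin_invariant G" "\<And>x. \<bar>G x\<bar> \<le> B"
  shows integrable_bin_invariant: "integrable M (\<lambda>\<omega>. G (\<lambda>i. P i \<omega>))"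
    and integrable_bin_invariant_p_minus: "integrable M (\<lambda>\<omega>. G (p_minus j \<omega>))"
proof -
  have "(\<lambda>\<omega>. G (\<lambda>i. P i \<omega>)) \<in> borel_measurable M"
    by (rule measurable_bin_invariant[OF assms(1)]) simp
  then show "integrable M (\<lambda>\<omega>. G (\<lambda>i. P i \<omega>))"
    using assms(2) by (intro integrable_const_bound[where B = B]) auto
  have "(\<lambda>\<omega>. G (\<lambda>i. if i = j then 0 else P i \<omega>)) \<in> borel_measurable M"
    by (rule measurable_bin_invariant[OF assms(1)]) simp
  then show "integrable M (\<lambda>\<omega>. G (p_minus j \<omega>))"
    using assms(2) unfolding fun_upd_def by (intro integrable_const_bound[where B = B]) auto
qed

lemma integral_in_first_bins_null:
  assumes "j \<in> H0" "k \<le> N"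
  shows "(\<integral>\<omega>. of_bool (in_first_bins k (P j \<omega>)) \<partial>M) = real k * q / real N"
proof -
  define r where "r = real k * q / real N"
  have "0 \<le> r" unfolding r_def using q_pos by simp
  have "real k * q \<le> real N * q" using assms(2) q_pos by simp
  also have "\<dots> \<le> real N" using mult_left_le[OF q_le_1] by simp
  finally have "r \<le> 1" unfolding r_def using N_pos by (simp add: divide_le_eq)
  have ind: "of_bool (in_first_bins k t) = indicator {0..<r} t" for t :: real
    unfolding in_first_bins_def r_def indicator_def using N_pos by (auto simp: less_divide_eq)
  have "(\<integral>\<omega>. of_bool (in_first_bins k (P j \<omega>)) \<partial>M) = (\<integral>t. indicator {0..<r} t \<partial>distr M lborel (P j) :: real)"
    unfolding ind by (rule integral_distr[symmetric]) (use assms(1) H0_sub in auto)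
  also have "\<dots> = measure (uniform_measure lborel {0..1}) {0..<r}"
    using null_uniform assms(1) by simp
  also have "\<dots> = measure lborel ({0..1} \<inter> {0..<r}) / measure lborel {0..1::real}"
    by (rule measure_uniform_measure) auto
  also have "{0..1} \<inter> {0..<r} = {0..<r}" using \<open>r \<le> 1\<close> by auto
  finally show ?thesis using \<open>0 \<le> r\<close> unfolding r_def by simp
qed

lemma indep_var_p_minus:
  fixes G :: "(nat \<Rightarrow> real) \<Rightarrow> real" and f :: "real \<Rightarrow> real"
  assumes "j \<in> {1..N}" "f \<in> borel_measurable borel" "bin_invariant G"
  shows "indep_var borel (\<lambda>\<omega>. f (P j \<omega>)) borel (\<lambda>\<omega>. G (p_minus j \<omega>))"
proof -
  let ?R = "{1..N} - {j}"
  have "indep_var (PiM {j} (\<lambda>_. borel)) (\<lambda>\<omega>. restrict (\<lambda>i. P i \<omega>) {j})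
      (PiM ?R (\<lambda>_. borel)) (\<lambda>\<omega>. restrict (\<lambda>i. P i \<omega>) ?R)"
    using assms(1) by (intro indep_var_restrict[OF indep]) auto
  moreover have "(\<lambda>v. f (v j)) \<in> borel_measurable (PiM {j} (\<lambda>_. borel))"
    using assms(2) by measurable
  moreover have "(\<lambda>v. if i \<in> ?R then v i else 0) \<in> borel_measurable (PiM ?R (\<lambda>_. borel))" for i
    by (cases "i \<in> ?R") auto
  then have "(\<lambda>v. G (\<lambda>i. if i \<in> ?R then v i else 0)) \<in> borel_measurable (PiM ?R (\<lambda>_. borel))"
    by (rule measurable_bin_invariant[OF assms(3)])
  ultimately have "indep_var borel ((\<lambda>v. f (v j)) \<circ> (\<lambda>\<omega>. restrict (\<lambda>i. P i \<omega>) {j}))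
      borel ((\<lambda>v. G (\<lambda>i. if i \<in> ?R then v i else 0)) \<circ> (\<lambda>\<omega>. restrict (\<lambda>i. P i \<omega>) ?R))"
    by (rule indep_var_compose)
  moreover have "((\<lambda>v. G (\<lambda>i. if i \<in> ?R then v i else 0)) \<circ> (\<lambda>\<omega>. restrict (\<lambda>i. P i \<omega>) ?R)) \<omega>
      = G (p_minus j \<omega>)" for \<omega>
  proof -
    have "(\<lambda>i. if i \<in> ?R then restrict (\<lambda>i. P i \<omega>) ?R i else 0) = (\<lambda>i. if i \<in> ?R then P i \<omega> else 0)"
      by auto
    moreover have "same_bins (\<lambda>i. if i \<in> ?R then P i \<omega> else 0) (p_minus j \<omega>)"
      by (rule same_bins_if_eq_on) auto
    ultimately show ?thesis using assms(3) unfolding bin_invariant_def by simp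
  qed
  ultimately show ?thesis by (simp add: comp_def)
qed

lemma integral_in_first_bins_times_p_minus:
  fixes G :: "(nat \<Rightarrow> real) \<Rightarrow> real"
  assumes "j \<in> H0" "k \<le> N" "bin_invariant G" "\<And>x. \<bar>G x\<bar> \<le> B"
  shows "integrable M (\<lambda>\<omega>. of_bool (in_first_bins k (P j \<omega>)) * G (p_minus j \<omega>))"
    and "(\<integral>\<omega>. of_bool (in_first_bins k (P j \<omega>)) * G (p_minus j \<omega>) \<partial>M) =
      real k * q / real N * (\<integral>\<omega>. G (p_minus j \<omega>) \<partial>M)"
proof -
  have "j \<in> {1..N}" using assms(1) H0_sub by auto
  have "(\<lambda>t. of_bool (in_first_bins k t) :: real) \<in> borel_measurable borel"
    unfolding in_first_bins_def by measurable
  then have indep: "indep_var borel (\<lambda>\<omega>. of_bool (in_first_bins k (P j \<omega>)) :: real) borel (\<lambda>\<omega>. G (p_minus j \<omega>))"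
    using indep_var_p_minus \<open>j \<in> {1..N}\<close> assms(3) by blast
  have "integrable M (\<lambda>\<omega>. of_bool (in_first_bins k (P j \<omega>)) :: real)"
    using \<open>j \<in> {1..N}\<close> unfolding in_first_bins_def
    by (intro integrable_const_bound[where B = 1]) auto
  moreover have "integrable M (\<lambda>\<omega>. G (p_minus j \<omega>))"
    using integrable_bin_invariant_p_minus assms(3,4) by blast
  ultimately show "integrable M (\<lambda>\<omega>. of_bool (in_first_bins k (P j \<omega>)) * G (p_minus j \<omega>))"
    and "(\<integral>\<omega>. of_bool (in_first_bins k (P j \<omega>)) * G (p_minus j \<omega>) \<partial>M) =
      real k * q / real N * (\<integral>\<omega>. G (p_minus j \<omega>) \<partial>M)"
    using indep_var_integrable[OF indep] indep_var_lebesgue_integral[OF indep]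
      integral_in_first_bins_null[OF assms(1,2)] by simp_all
qed

lemma integral_rejection_share:
  assumes "j \<in> H0" "bin_invariant E" "bin_invariant K" "cutoff_stable E K" "\<And>y. K y \<le> N"
  shows "(\<integral>\<omega>. rejection_share E K j (\<lambda>i. P i \<omega>) \<partial>M) =
    q / real N * (\<integral>\<omega>. of_bool (E (p_minus j \<omega>) \<and> 1 \<le> K (p_minus j \<omega>)) \<partial>M)"
proof -
  define W where "W k y = of_bool (E y \<and> K y = k) / real k" for k y
  have W: "bin_invariant (W k)" "\<bar>W k y\<bar> \<le> 1" for k y
    using assms(2,3) unfolding bin_invariant_def W_def by (cases k; auto)+
  have summand: "integrable M (\<lambda>\<omega>. of_bool (in_first_bins k (P j \<omega>)) * W k (p_minus j \<omega>))"
    "(\<integral>\<omega>. of_bool (in_first_bins k (P j \<omega>)) * W k (p_minus j \<omega>) \<partial>M) =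
      real k * q / real N * (\<integral>\<omega>. W k (p_minus j \<omega>) \<partial>M)" if "k \<in> {1..N}" for k
    using integral_in_first_bins_times_p_minus[OF assms(1) _ W(1) W(2)[of k]] that by auto
  have weights: "(\<Sum>k\<in>{1..N}. real k * q / real N * W k y) = q / real N * of_bool (E y \<and> 1 \<le> K y)" for y
  proof -
    have "(\<Sum>k\<in>{1..N}. real k * q / real N * W k y) =
        (\<Sum>k\<in>{1..N}. if k = K y then q / real N * of_bool (E y) else 0)"
      unfolding W_def by (intro sum.cong) auto
    then show ?thesis using assms(5)[of y] by (simp add: sum.delta)
  qed
  have "(\<integral>\<omega>. rejection_share E K j (\<lambda>i. P i \<omega>) \<partial>M) =
      (\<integral>\<omega>. (\<Sum>k\<in>{1..N}. of_bool (in_first_bins k (P j \<omega>)) * W k (p_minus j \<omega>)) \<partial>M)"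
    using rejection_share_leave_one_out[OF assms(4,5)] unfolding W_def by simp
  also have "\<dots> = (\<Sum>k\<in>{1..N}. (\<integral>\<omega>. of_bool (in_first_bins k (P j \<omega>)) * W k (p_minus j \<omega>) \<partial>M))"
    by (rule Bochner_Integration.integral_sum) (rule summand(1))
  also have "\<dots> = (\<Sum>k\<in>{1..N}. real k * q / real N * (\<integral>\<omega>. W k (p_minus j \<omega>) \<partial>M))"
    using summand(2) by (intro sum.cong) auto
  also have "\<dots> = (\<integral>\<omega>. (\<Sum>k\<in>{1..N}. real k * q / real N * W k (p_minus j \<omega>)) \<partial>M)"
    using integrable_bin_invariant_p_minus[OF W] by (subst Bochner_Integration.integral_sum) auto
  also have "\<dots> = (\<integral>\<omega>. q / real N * of_bool (E (p_minus j \<omega>) \<and> 1 \<le> K (p_minus j \<omega>)) \<partial>M)"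
    using weights by simp
  finally show ?thesis by simp
qed

lemma integral_rejection_share_k_plus_eq_k_BH:
  assumes "j \<in> H0"
  shows "(\<integral>\<omega>. rejection_share increase_applies kplus j (\<lambda>i. P i \<omega>) \<partial>M) =
    (\<integral>\<omega>. rejection_share increase_applies (k_BH q N) j (\<lambda>i. P i \<omega>) \<partial>M)"
proof -
  have "increase_applies y \<and> 1 \<le> kplus y \<longleftrightarrow> increase_applies y" for y
    using load_upto_k_plus(1)[of y] c_pos by auto
  moreover have "1 \<le> k_BH q N (p_minus j \<omega>)" for \<omega>
  proof (rule k_BH_pos)
    show "j \<in> {1..N}" using assms H0_sub by auto
    show "in_bin q N 1 (p_minus j \<omega> j)" using N_pos q_pos unfolding in_bin_def by auto
  qed
  ultimately show ?thesis
    using integral_rejection_share[OF assms bin_invariant_increase_applies bin_invariant_k_plus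
        cutoff_stable_k_plus k_plus_le]
      integral_rejection_share[OF assms bin_invariant_increase_applies bin_invariant_k_BH
        cutoff_stable_k_BH k_BH_le]
    by simp
qed

lemma expected_FDP_BH_increase:
  assumes "\<And>x. is_increase q N H0 c x (incr x)"
  shows "(\<integral>\<omega>. FDP_BH q N H0 (incr (\<lambda>i. P i \<omega>)) \<partial>M) = (\<integral>\<omega>. FDP_BH q N H0 (\<lambda>i. P i \<omega>) \<partial>M) +
    (\<integral>\<omega>. (if increase_applies (\<lambda>i. P i \<omega>) then real c / real (kplus (\<lambda>i. P i \<omega>)) else 0) \<partial>M)"
proof -
  let ?D = "\<lambda>x. if increase_applies x then real c / real (kplus x) else 0"
  let ?a = "\<lambda>j. rejection_share increase_applies kplus j"
  let ?b = "\<lambda>j. rejection_share increase_applies (k_BH q N) j"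
  have "finite H0" using H0_sub finite_subset by blast
  have H0_N: "j \<in> {1..N}" if "j \<in> H0" for j using that H0_sub by auto
  have "\<bar>?D x\<bar> \<le> real c" for x
  proof (cases "increase_applies x")
    case True
    then have "1 \<le> kplus x" using load_upto_k_plus(1)[OF True] c_pos by linarith
    then have "real c / real (kplus x) \<le> real c / 1" by (intro divide_left_mono) auto
    then show ?thesis using True by simp
  qed simp
  then have int_D: "integrable M (\<lambda>\<omega>. ?D (\<lambda>i. P i \<omega>))"
    using bin_invariant_increase_applies bin_invariant_k_plus
    by (intro integrable_bin_invariant[where B = "real c"]) (auto simp: bin_invariant_def)
  have int_FDP: "integrable M (\<lambda>\<omega>. FDP_BH q N H0 (\<lambda>i. P i \<omega>))"
    using bin_invariant_FDP_BH[OF H0_sub] abs_FDP_BH_le_1[OF H0_sub] by (rule integrable_bin_invariant)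
  have int_a: "integrable M (\<lambda>\<omega>. ?a j (\<lambda>i. P i \<omega>))" if "j \<in> H0" for j
    using bin_invariant_rejection_share[OF bin_invariant_increase_applies bin_invariant_k_plus
        k_plus_le H0_N[OF that]] abs_rejection_share_le
    by (rule integrable_bin_invariant)
  have int_b: "integrable M (\<lambda>\<omega>. ?b j (\<lambda>i. P i \<omega>))" if "j \<in> H0" for j
    using bin_invariant_rejection_share[OF bin_invariant_increase_applies bin_invariant_k_BH
        k_BH_le H0_N[OF that]] abs_rejection_share_le
    by (rule integrable_bin_invariant)
  have "(\<integral>\<omega>. FDP_BH q N H0 (incr (\<lambda>i. P i \<omega>)) \<partial>M) = (\<integral>\<omega>. FDP_BH q N H0 (\<lambda>i. P i \<omega>) +
      ?D (\<lambda>i. P i \<omega>) + (\<Sum>j\<in>H0. ?a j (\<lambda>i. P i \<omega>)) - (\<Sum>j\<in>H0. ?b j (\<lambda>i. P i \<omega>)) \<partial>M)"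
    using FDP_BH_increase_decomp[OF assms] by simp
  also have "\<dots> = (\<integral>\<omega>. FDP_BH q N H0 (\<lambda>i. P i \<omega>) \<partial>M) + (\<integral>\<omega>. ?D (\<lambda>i. P i \<omega>) \<partial>M) +
      (\<Sum>j\<in>H0. \<integral>\<omega>. ?a j (\<lambda>i. P i \<omega>) \<partial>M) - (\<Sum>j\<in>H0. \<integral>\<omega>. ?b j (\<lambda>i. P i \<omega>) \<partial>M)"
    using int_FDP int_D int_a int_b by (simp add: Bochner_Integration.integral_sum)
  also have "(\<Sum>j\<in>H0. \<integral>\<omega>. ?a j (\<lambda>i. P i \<omega>) \<partial>M) = (\<Sum>j\<in>H0. \<integral>\<omega>. ?b j (\<lambda>i. P i \<omega>) \<partial>M)"
    using integral_rejection_share_k_plus_eq_k_BH by (intro sum.cong) auto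
  finally show ?thesis by simp
qed

end

theorem theorem2:
  fixes N c :: nat and q :: real and H0 :: "nat set"
    and M :: "'a measure" and P :: "nat \<Rightarrow> 'a \<Rightarrow> real"
    and incr :: "(nat \<Rightarrow> real) \<Rightarrow> (nat \<Rightarrow> real)"
  assumes "N \<ge> 1" and "H0 \<subseteq> {1..N}" and "0 < q" and "q < 1" and "c \<ge> 1"
    and "prob_space M"
    and "prob_space.indep_vars M (\<lambda>_. borel) P {1..N}"
    and "\<forall>i\<in>H0. distr M lborel (P i) = uniform_measure lborel {0..1}"
    and "\<forall>i\<in>{1..N} - H0. AE \<omega> in M. P i \<omega> \<in> {0..1}"
    and "\<forall>x. is_increase q N H0 c x (incr x)"
  shows "integral\<^sup>L M (\<lambda>\<omega>. FDP_BH q N H0 (incr (\<lambda>i. P i \<omega>))) =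
         integral\<^sup>L M (\<lambda>\<omega>. FDP_BH q N H0 (\<lambda>i. P i \<omega>)) +
         integral\<^sup>L M (\<lambda>\<omega>. if load q N H0 (\<lambda>i. P i \<omega>) (N + 1) \<ge> c
                            then real c / real (k_plus q N H0 c (\<lambda>i. P i \<omega>)) else 0)"
proof -
  have "BH_prob q N H0 c M P"
    using assms unfolding BH_prob_def BH_prob_axioms_def BH_increase_def BH_increase_axioms_def
      BH_bins_def by simp
  then show ?thesis
    using BH_prob.expected_FDP_BH_increase assms(10) by blast
qed

end
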